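(* Let $\mathcal S=(0,1]$ with Lebesgue measure $\mu$, let $\kappa(x,y)=\frac{1}{\max\{x,y\}}-1$, and fix $\lambda>0$. Then $\rho_1(\lambda\kappa)=1/(1+\lambda)$ and $\rho_k(\lambda\kappa)=\frac{k\lambda}{2(1+k\lambda)}\sum_{j=1}^{k-1}\rho_{k-j}(\lambda\kappa)\rho_j(\lambda\kappa)$ for $k\ge2$. Hence, for each $k\ge1$, $\rho_k(\lambda\kappa)$ is a rational function of $\lambda$ with poles only at $-1/j$, $j=1,\dots,k$. Moreover, each function $x\mapsto\rho_k(\lambda\kappa;x)$ is a polynomial in $x^\lambda$ whose coefficients are rational functions of $\lambda$, and these can be calculated recursively from $x\frac{d}{dx}\rho_k(\lambda\kappa;x)=k\lambda\rho_k(\lambda\kappa;x)-\sum_{j=1}^{k-1}j\lambda\,\rho_{k-j}(\lambda\kappa)\rho_j(\lambda\kappa;x)$, $k\ge1$, together with the boundary conditions $\rho_1(\lambda\kappa;1)=1$ and $\rho_k(\lambda\kappa;1)=0$ for $k\ge2$.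
   Context: For a kernel $\kappa'$ on $((0,1],\mu)$, the branching process $\mathfrak X_{\kappa'}(x)$ starts with one particle of type $x$; each particle of type $y$ independently has children whose types form a Poisson process on $(0,1]$ with intensity $\kappa'(y,z)\,dz$. $|\mathfrak X_{\kappa'}(x)|$ is its total population, $\rho_k(\kappa';x)=\mathbb P(|\mathfrak X_{\kappa'}(x)|=k)$ for $k\ge1$, and $\rho_k(\kappa')=\int_0^1\rho_k(\kappa';x)\,dx$. *)

theory Defs
  imports "HOL-Analysis.Analysis" "HOL-Computational_Algebra.Polynomial"
begin

(* total intensity of the children Poisson process of a particle of type x *)
definition kernel_mass :: "(real \<Rightarrow> real \<Rightarrow> real) \<Rightarrow> real \<Rightarrow> real" where
  "kernel_mass K x = (LINT y:{0<..1}|lborel. K x y)"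

definition compositions :: "nat \<Rightarrow> nat \<Rightarrow> nat list set" where
  "compositions n m = {ks. length ks = m \<and> (\<forall>k\<in>set ks. 1 \<le> k) \<and> sum_list ks = n}"

(* One-step (first-generation) decomposition of the branching process X_K(x):
   the root has N ~ Poisson(kernel_mass K x) children, whose types are, given N = m,
   iid with density K(x,.)/kernel_mass K x; their subtrees are independent copies
   X_K(y_i).  Hence P(|X_K(x)| = k) = sum_m P(N=m) P(sizes of the m subtrees sum to k-1).
   Given the table r j y = P(|X_K(y)| = j) for j < k, this computes the value for k. *)
definition rho_step :: "(real \<Rightarrow> real \<Rightarrow> real) \<Rightarrow> (nat \<Rightarrow> real \<Rightarrow> real) \<Rightarrow> nat \<Rightarrow> real \<Rightarrow> real" where
  "rho_step K r k x =
     (if k = 0 then 0 else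
        (\<Sum>m<k. (exp (- kernel_mass K x) * kernel_mass K x ^ m / fact m) *
           (\<Sum>ks\<in>compositions (k - 1) m.
              (\<Prod>i<m. (LINT y:{0<..1}|lborel. (K x y / kernel_mass K x) * r (ks ! i) y)))))"

(* rho_k(K; x) = P(|X_K(x)| = k); rho_step K r k only uses r j for j < k,
   so iterating k times from the zero table yields the correct value at index k. *)
definition rho_x :: "(real \<Rightarrow> real \<Rightarrow> real) \<Rightarrow> nat \<Rightarrow> real \<Rightarrow> real" where
  "rho_x K k x = ((rho_step K ^^ k) (\<lambda>_ _. 0)) k x"

definition rho :: "(real \<Rightarrow> real \<Rightarrow> real) \<Rightarrow> nat \<Rightarrow> real" where
  "rho K k = (LINT x:{0<..1}|lborel. rho_x K k x)"

definition kappa :: "real \<Rightarrow> real \<Rightarrow> real" where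
  "kappa x y = 1 / max x y - 1"

end

theory Submission
  imports Defs "HOL-Computational_Algebra.Formal_Power_Series"
begin

text \<open>Write \<open>t = x powr \<lambda>\<close>. The ODE with its boundary values determines polynomials \<open>P\<^sub>k(t)\<close> whose
  coefficients are rational in \<open>\<lambda>\<close> with poles at \<open>-1/j\<close>; integrating \<open>P\<^sub>k(x powr \<lambda>)\<close> over \<open>(0,1]\<close>
  termwise, and integrating the ODE itself, gives the values \<open>\<rho>\<^sub>k(\<lambda>\<kappa>)\<close> and their quadratic recursion.

  What remains is \<open>\<rho>\<^sub>k(\<lambda>\<kappa>; x) = P\<^sub>k(x powr \<lambda>)\<close>, by induction on \<open>k\<close> through the one-generation
  decomposition. The kernel mass is \<open>-\<lambda> ln x\<close>, so \<open>exp (-mass) = t\<close>, and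
  \<open>G\<^sub>j(t) = \<integral> \<lambda>\<kappa>(x,y) P\<^sub>j(y powr \<lambda>) dy\<close> is again a polynomial in \<open>t\<close>; the decomposition then amounts
  to \<open>R = z t exp G\<close> for the generating functions \<open>R = \<Sum> P\<^sub>k z\<^sup>k\<close> and \<open>G = \<Sum> G\<^sub>k z\<^sup>k\<close>. Coefficientwise,
  \<open>R\<close> and \<open>G\<close> solve the linear PDE \<open>t \<partial>\<^sub>t F = (1 - \<rho>(z)) z \<partial>\<^sub>z F\<close>, the second with source \<open>-\<rho>\<close>,
  where \<open>\<rho>(z) = \<Sum> \<rho>\<^sub>k(\<lambda>\<kappa>) z\<^sup>k\<close>. Hence \<open>Z = z R' - R - R z G'\<close> solves a homogeneous such PDE and
  vanishes at \<open>t = 1\<close>, so \<open>Z = 0\<close>; and \<open>z R' = R (1 + z G')\<close> integrates to \<open>R = z t exp G\<close>.\<close>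

no_notation vec_nth (infixl \<open>$\<close> 90)
notation fps_nth (infixl \<open>$\<close> 75)

section \<open>The coefficients of \<open>\<rho>\<^sub>k\<close> as a polynomial in \<open>x powr \<lambda>\<close>\<close>

text \<open>\<open>rho_coeff l k i\<close> is the coefficient of \<open>t ^ i\<close>, \<open>t = x powr l\<close>, in \<open>\<rho>\<^sub>k(l\<kappa>; x)\<close>. The
  coefficients below the diagonal come from comparing coefficients in the Euler-type ODE, using
  \<open>\<rho>\<^sub>j(l\<kappa>) = (\<Sum>i. rho_coeff l j i / (i * l + 1))\<close>; the diagonal one from the boundary value at
  \<open>x = 1\<close>.\<close>
function rho_coeff :: "real \<Rightarrow> nat \<Rightarrow> nat \<Rightarrow> real" where
  "rho_coeff l k i =
    (if k = 0 \<or> i = 0 \<or> k < i then 0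
     else if k = 1 then 1
     else if i < k then
       (\<Sum>j=1..k-1. real j * (\<Sum>i'\<le>k-j. rho_coeff l (k-j) i' / (real i' * l + 1)) * rho_coeff l j i)
         / real (k - i)
     else - (\<Sum>i'<k. rho_coeff l k i'))"
  by pat_completeness auto
termination
  by (relation "measures [\<lambda>(l,k,i). k, \<lambda>(l,k,i). i]") auto

declare rho_coeff.simps [simp del]

definition rho_int :: "real \<Rightarrow> nat \<Rightarrow> real" where
  "rho_int l k = (\<Sum>i\<le>k. rho_coeff l k i / (real i * l + 1))"

lemma rho_coeff_0 [simp]: "rho_coeff l 0 i = 0" "rho_coeff l k 0 = 0"
  by (simp_all add: rho_coeff.simps)

lemma rho_coeff_eq_0: "k < i \<Longrightarrow> rho_coeff l k i = 0"
  by (simp add: rho_coeff.simps)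

lemma rho_coeff_below_diag:
  "2 \<le> k \<Longrightarrow> 1 \<le> i \<Longrightarrow> i < k \<Longrightarrow>
    rho_coeff l k i = (\<Sum>j=1..k-1. real j * rho_int l (k-j) * rho_coeff l j i) / real (k - i)"
  by (subst rho_coeff.simps) (auto simp: rho_int_def)

lemma rho_coeff_diag: "2 \<le> k \<Longrightarrow> rho_coeff l k k = - (\<Sum>i<k. rho_coeff l k i)"
  by (subst rho_coeff.simps) auto

lemma rho_int_0 [simp]: "rho_int l 0 = 0"
  by (simp add: rho_int_def)

lemma rho_int_1: "rho_int l 1 = 1 / (1 + l)"
  by (simp add: rho_int_def rho_coeff.simps add.commute)

lemma rho_int_eq_sum: "j \<le> n \<Longrightarrow> rho_int l j = (\<Sum>i\<le>n. rho_coeff l j i / (real i * l + 1))"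
  unfolding rho_int_def by (rule sum.mono_neutral_left) (auto simp: rho_coeff_eq_0)

lemma rho_coeff_euler:
  assumes "1 \<le> k"
  shows "real i * rho_coeff l k i
    = real k * rho_coeff l k i - (\<Sum>j=1..k-1. real j * rho_int l (k-j) * rho_coeff l j i)"
proof -
  have no_lower: "(\<Sum>j=1..k-1. real j * rho_int l (k-j) * rho_coeff l j i) = 0" if "k \<le> i"
    using that by (intro sum.neutral) (auto simp: rho_coeff_eq_0)
  consider "i = 0" | "k = 1" | "2 \<le> k" "1 \<le> i" "i < k" | "k \<le> i"
    using assms by linarith
  then show ?thesis
  proof cases
    case 2
    then show ?thesis by (cases "i = 1") (auto simp: rho_coeff.simps)
  next
    case 3
    then show ?thesis
      by (simp add: rho_coeff_below_diag[OF 3] field_simps)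
  next
    case 4
    then show ?thesis using no_lower[OF 4] by (cases "k = i") (auto simp: rho_coeff_eq_0)
  qed simp
qed

lemma sum_rho_coeff: "1 \<le> k \<Longrightarrow> (\<Sum>i\<le>k. rho_coeff l k i) = (if k = 1 then 1 else 0)"
  by (cases "k = 1")
     (simp_all add: rho_coeff.simps rho_coeff_diag lessThan_Suc_atMost[symmetric])

lemma sum_weighted_symmetric:
  fixes f :: "nat \<Rightarrow> real"
  assumes "\<And>j. j \<in> {1..k-1} \<Longrightarrow> f (k - j) = f j"
  shows "(\<Sum>j=1..k-1. real j * f j) = real k / 2 * (\<Sum>j=1..k-1. f j)"
proof -
  have "(\<Sum>j=1..k-1. real j * f j) = (\<Sum>j=1..k-1. real (k - j) * f (k - j))"
    by (rule sum.reindex_bij_witness[of _ "\<lambda>j. k - j" "\<lambda>j. k - j"]) auto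
  also have "\<dots> = (\<Sum>j=1..k-1. (real k - real j) * f j)"
    by (rule sum.cong[OF refl]) (use assms in auto)
  finally have "2 * (\<Sum>j=1..k-1. real j * f j)
      = (\<Sum>j=1..k-1. real j * f j) + (\<Sum>j=1..k-1. (real k - real j) * f j)"
    by simp
  also have "\<dots> = real k * (\<Sum>j=1..k-1. f j)"
    by (simp add: sum.distrib[symmetric] sum_distrib_left algebra_simps)
  finally show ?thesis by simp
qed

text \<open>Integrating the ODE over \<open>(0,1]\<close>: \<open>(k l + 1) \<rho>\<^sub>k = l \<Sum>j. j \<rho>\<^sub>k\<^sub>-\<^sub>j \<rho>\<^sub>j\<close>, then symmetrise.\<close>
lemma rho_int_rec:
  assumes l: "0 < l" and k: "2 \<le> k"
  shows "rho_int l k = real k * l / (2 * (1 + real k * l)) * (\<Sum>j=1..k-1. rho_int l (k - j) * rho_int l j)"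
proof -
  have pos: "0 < real i * l + 1" for i
    using l by (simp add: add_nonneg_pos)
  then have nz: "real i * l + 1 \<noteq> 0" for i
    by (metis less_irrefl)
  have symm: "(\<Sum>i\<le>k. (real k - real i) * rho_coeff l k i / (real i * l + 1))
      = (\<Sum>j=1..k-1. real j * (rho_int l (k-j) * rho_int l j))"
  proof -
    have "(real k - real i) * rho_coeff l k i = (\<Sum>j=1..k-1. real j * rho_int l (k-j) * rho_coeff l j i)" for i
      using rho_coeff_euler[of k i l] k by (simp add: algebra_simps)
    then have "(\<Sum>i\<le>k. (real k - real i) * rho_coeff l k i / (real i * l + 1))
        = (\<Sum>j=1..k-1. real j * rho_int l (k-j) * (\<Sum>i\<le>k. rho_coeff l j i / (real i * l + 1)))"
      by (simp add: sum_divide_distrib sum_distrib_left sum.swap[of _ "{..k}"] mult.assoc)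
    also have "\<dots> = (\<Sum>j=1..k-1. real j * (rho_int l (k-j) * rho_int l j))"
      by (intro sum.cong refl) (auto simp: rho_int_eq_sum[of _ k, symmetric])
    finally show ?thesis .
  qed
  have "(real k * l + 1) * rho_int l k
      = l * (\<Sum>i\<le>k. (real k - real i) * rho_coeff l k i / (real i * l + 1))"
  proof -
    have "l * (\<Sum>i\<le>k. (real k - real i) * rho_coeff l k i / (real i * l + 1))
        = (\<Sum>i\<le>k. (real k * l + 1) * (rho_coeff l k i / (real i * l + 1)) - rho_coeff l k i)"
      unfolding sum_distrib_left using nz by (intro sum.cong refl) (simp add: field_simps)
    also have "\<dots> = (real k * l + 1) * rho_int l k"
      using sum_rho_coeff[of k l] k by (simp add: sum_subtractf sum_distrib_left rho_int_def)
    finally show ?thesis by simp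
  qed
  also have "\<dots> = l * (\<Sum>j=1..k-1. real j * (rho_int l (k-j) * rho_int l j))"
    by (simp only: symm)
  also have "\<dots> = l * (real k / 2 * (\<Sum>j=1..k-1. rho_int l (k-j) * rho_int l j))"
    by (subst sum_weighted_symmetric) (auto simp: mult.commute)
  finally show ?thesis
    using pos[of k] by (simp add: field_simps)
qed

section \<open>Euler operators on polynomials and power series\<close>

definition euler_poly :: "real poly \<Rightarrow> real poly" where
  "euler_poly p = [:0, 1:] * pderiv p"

lemma coeff_euler_poly: "coeff (euler_poly p) i = real i * coeff p i"
  by (cases i) (auto simp: euler_poly_def coeff_pderiv)

lemma euler_poly_mult: "euler_poly (p * q) = euler_poly p * q + p * euler_poly q"
  by (simp add: euler_poly_def pderiv_mult algebra_simps)

lemma euler_poly_add: "euler_poly (p + q) = euler_poly p + euler_poly q"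
  by (simp add: euler_poly_def pderiv_add algebra_simps)

lemma euler_poly_diff: "euler_poly (p - q) = euler_poly p - euler_poly q"
  by (simp add: euler_poly_def pderiv_diff algebra_simps)

lemma euler_poly_0 [simp]: "euler_poly 0 = 0"
  by (simp add: euler_poly_def)

lemma euler_poly_sum: "euler_poly (sum f A) = (\<Sum>a\<in>A. euler_poly (f a))"
  by (induction A rule: infinite_finite_induct) (simp_all add: euler_poly_add)

lemma euler_poly_of_nat_mult: "euler_poly (of_nat n * p) = of_nat n * euler_poly p"
  by (simp add: euler_poly_def of_nat_poly pderiv_smult)

text \<open>An eigenpolynomial of \<open>t d/dt\<close> is a monomial, so it is determined by its value at \<open>1\<close>.\<close>
lemma euler_poly_eigen_eq_0:
  assumes "euler_poly p = of_nat n * p" "poly p 1 = 0"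
  shows "p = 0"
proof -
  have other: "coeff p i = 0" if "i \<noteq> n" for i
  proof -
    have "real i * coeff p i = real n * coeff p i"
      using arg_cong[OF assms(1), of "\<lambda>q. coeff q i"] by (simp add: coeff_euler_poly of_nat_poly)
    then show ?thesis using that by simp
  qed
  have "poly p 1 = (\<Sum>i\<le>degree p. coeff p i)"
    by (simp add: poly_altdef)
  also have "\<dots> = (\<Sum>i\<le>degree p. if i = n then coeff p n else 0)"
    by (intro sum.cong) (auto simp: other)
  also have "\<dots> = coeff p n"
    by (auto simp: coeff_eq_0)
  finally have "coeff p n = 0" using assms(2) by simp
  then show ?thesis
    using other by (metis leading_coeff_0_iff)
qed

definition fps_euler :: "'a :: comm_semiring_1 fps \<Rightarrow> 'a fps" where
  "fps_euler F = fps_X * fps_deriv F"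

lemma fps_euler_nth [simp]: "fps_euler F $ n = of_nat n * (F $ n :: 'a :: comm_ring_1)"
  by (cases n) (simp_all add: fps_euler_def)

lemma fps_euler_mult: "fps_euler (F * G) = fps_euler F * G + F * (fps_euler G :: 'a :: comm_ring_1 fps)"
  and fps_euler_add: "fps_euler (F + G) = fps_euler F + (fps_euler G :: 'a :: comm_ring_1 fps)"
  and fps_euler_diff: "fps_euler (F - G) = fps_euler F - (fps_euler G :: 'a :: comm_ring_1 fps)"
  and fps_euler_uminus: "fps_euler (- F) = - (fps_euler F :: 'a :: comm_ring_1 fps)"
  and fps_euler_0: "fps_euler (0 :: 'a :: comm_ring_1 fps) = 0"
  and fps_euler_1: "fps_euler (1 :: 'a :: comm_ring_1 fps) = 0"
  by (simp_all add: fps_euler_def algebra_simps)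

definition euler_coeffs :: "real poly fps \<Rightarrow> real poly fps" where
  "euler_coeffs F = Abs_fps (\<lambda>n. euler_poly (F $ n))"

lemma euler_coeffs_nth [simp]: "euler_coeffs F $ n = euler_poly (F $ n)"
  by (simp add: euler_coeffs_def)

lemma euler_coeffs_mult: "euler_coeffs (F * G) = euler_coeffs F * G + F * euler_coeffs G"
  by (rule fps_ext) (simp add: fps_mult_nth euler_poly_sum euler_poly_mult sum.distrib)

lemma euler_coeffs_add: "euler_coeffs (F + G) = euler_coeffs F + euler_coeffs G"
  and euler_coeffs_diff: "euler_coeffs (F - G) = euler_coeffs F - euler_coeffs G"
  by (simp_all add: fps_ext euler_poly_add euler_poly_diff)

lemma euler_coeffs_fps_euler: "euler_coeffs (fps_euler F) = fps_euler (euler_coeffs F)"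
  by (rule fps_ext) (simp add: euler_poly_of_nat_mult)

text \<open>In the bivariate series \<open>F(t, z)\<close> this is the operator \<open>t \<partial>\<^sub>t F - (1 - \<rho>(z)) z \<partial>\<^sub>z F\<close>.\<close>
definition pde_op :: "real poly fps \<Rightarrow> real poly fps \<Rightarrow> real poly fps" where
  "pde_op \<rho> F = euler_coeffs F - (1 - \<rho>) * fps_euler F"

lemma pde_op_add: "pde_op \<rho> (F + G) = pde_op \<rho> F + pde_op \<rho> G"
  and pde_op_diff: "pde_op \<rho> (F - G) = pde_op \<rho> F - pde_op \<rho> G"
  and pde_op_mult: "pde_op \<rho> (F * G) = pde_op \<rho> F * G + F * pde_op \<rho> G"
  by (simp_all add: pde_op_def euler_coeffs_add euler_coeffs_diff euler_coeffs_mult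
      fps_euler_add fps_euler_diff fps_euler_mult algebra_simps)

lemma pde_op_fps_euler: "pde_op \<rho> (fps_euler F) = fps_euler (pde_op \<rho> F) - fps_euler \<rho> * fps_euler F"
  by (simp add: pde_op_def euler_coeffs_fps_euler fps_euler_add fps_euler_diff fps_euler_mult fps_euler_1
      algebra_simps)

lemma pde_op_defect:
  assumes "pde_op \<rho> R = 0" "pde_op \<rho> G = - \<rho>"
  shows "pde_op \<rho> (fps_euler R - R - R * fps_euler G)
    = - fps_euler \<rho> * (fps_euler R - R - R * fps_euler G)"
  using assms
  by (simp add: pde_op_add pde_op_diff pde_op_mult pde_op_fps_euler fps_euler_0 fps_euler_uminus
      algebra_simps)

text \<open>Comparing coefficients of \<open>z ^ n\<close> makes \<open>Z $ n\<close> an eigenpolynomial of \<open>t d/dt\<close>, once the lower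
  coefficients are known to vanish.\<close>
lemma pde_op_unique:
  assumes "\<rho> $ 0 = 0" and Z: "pde_op \<rho> Z = - fps_euler \<rho> * Z" and "\<And>n. poly (Z $ n) 1 = 0"
  shows "Z = 0"
proof -
  have "Z $ n = 0" for n
  proof (induction n rule: less_induct)
    case (less n)
    have first: "(F * G) $ n = F $ 0 * G $ n" if "\<And>i. i < n \<Longrightarrow> G $ i = 0" for F G :: "real poly fps"
    proof -
      have "(\<Sum>i=Suc 0..n. F $ i * G $ (n - i)) = 0"
        using that by (intro sum.neutral) auto
      then show ?thesis by (simp add: fps_mult_nth sum.atLeast_Suc_atMost)
    qed
    have "((1 - \<rho>) * fps_euler Z) $ n = of_nat n * Z $ n" "(fps_euler \<rho> * Z) $ n = 0"
      using first[of "fps_euler Z" "1 - \<rho>"] first[of Z "fps_euler \<rho>"] assms(1) less by simp_all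
    then have "euler_poly (Z $ n) = of_nat n * Z $ n"
      using arg_cong[OF Z, of "\<lambda>F. F $ n"] assms(1) by (simp add: pde_op_def algebra_simps)
    then show ?case
      using euler_poly_eigen_eq_0 assms(3) by blast
  qed
  then show ?thesis by (simp add: fps_eq_iff)
qed

section \<open>The generating functions\<close>

definition rho_poly :: "real \<Rightarrow> nat \<Rightarrow> real poly" where
  "rho_poly l k = (\<Sum>i\<le>k. monom (rho_coeff l k i) i)"

text \<open>\<open>poly (kernel_poly l k) (x powr l)\<close> will be \<open>\<integral> l \<kappa>(x,y) \<rho>\<^sub>k(l\<kappa>; y) dy\<close>.\<close>
definition kernel_poly :: "real \<Rightarrow> nat \<Rightarrow> real poly" where
  "kernel_poly l k = (\<Sum>i\<le>k. smult (rho_coeff l k i / (real i * (real i * l + 1))) (1 - monom 1 i))"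

definition kernel_const :: "real \<Rightarrow> nat \<Rightarrow> real" where
  "kernel_const l k = (\<Sum>i\<le>k. rho_coeff l k i / (real i * (real i * l + 1)))"

lemma coeff_rho_poly: "coeff (rho_poly l k) i = rho_coeff l k i"
  by (auto simp: rho_poly_def coeff_sum rho_coeff_eq_0)

lemma coeff_kernel_poly:
  "coeff (kernel_poly l k) m
    = (if m = 0 then kernel_const l k else - rho_coeff l k m / (real m * (real m * l + 1)))"
proof (cases "m = 0")
  case True
  then show ?thesis
    by (auto simp: kernel_poly_def kernel_const_def coeff_sum intro!: sum.cong)
next
  case False
  then have "coeff (kernel_poly l k) m
      = - (\<Sum>i\<le>k. if i = m then rho_coeff l k m / (real m * (real m * l + 1)) else 0)"
    by (simp add: kernel_poly_def coeff_sum sum_negf[symmetric] if_distrib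
        cong: sum.cong if_cong)
  then show ?thesis
    using False by (simp add: rho_coeff_eq_0)
qed

lemma poly_rho_poly_1: "poly (rho_poly l k) 1 = (if k = 1 then 1 else 0)"
  by (cases "k = 0") (simp_all add: rho_poly_def poly_sum poly_monom sum_rho_coeff)

lemma poly_kernel_poly_1: "poly (kernel_poly l k) 1 = 0"
  by (simp add: kernel_poly_def poly_sum poly_monom)

lemma rho_coeff_euler_conv:
  "real i * rho_coeff l k i
    = real k * rho_coeff l k i - (\<Sum>j\<le>k. rho_int l j * real (k - j) * rho_coeff l (k - j) i)"
proof (cases "k = 0")
  case False
  have "(\<Sum>j\<le>k. rho_int l j * real (k - j) * rho_coeff l (k - j) i)
      = (\<Sum>j=1..k-1. rho_int l j * real (k - j) * rho_coeff l (k - j) i)"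
    by (rule sum.mono_neutral_right) (auto simp: not_le)
  also have "\<dots> = (\<Sum>j=1..k-1. real j * rho_int l (k - j) * rho_coeff l j i)"
    by (rule sum.reindex_bij_witness[of _ "\<lambda>j. k - j" "\<lambda>j. k - j"]) auto
  finally show ?thesis
    using rho_coeff_euler[of k i l] False by simp
qed simp

lemma kernel_const_eq_sum:
  "m \<le> n \<Longrightarrow> kernel_const l m = (\<Sum>i\<le>n. rho_coeff l m i / (real i * (real i * l + 1)))"
  unfolding kernel_const_def by (rule sum.mono_neutral_left) (auto simp: rho_coeff_eq_0)

lemma kernel_const_euler:
  "rho_int l k = real k * kernel_const l k - (\<Sum>j\<le>k. rho_int l j * real (k - j) * kernel_const l (k - j))"
proof -
  have "rho_int l k = (\<Sum>i\<le>k. (real i * rho_coeff l k i) / (real i * (real i * l + 1)))"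
    unfolding rho_int_def by (intro sum.cong) auto
  also have "\<dots> = (\<Sum>i\<le>k. (real k * rho_coeff l k i
      - (\<Sum>j\<le>k. rho_int l j * real (k - j) * rho_coeff l (k - j) i)) / (real i * (real i * l + 1)))"
    by (simp only: rho_coeff_euler_conv[symmetric])
  also have "\<dots> = real k * kernel_const l k
      - (\<Sum>i\<le>k. \<Sum>j\<le>k. rho_int l j * real (k - j) * (rho_coeff l (k - j) i / (real i * (real i * l + 1))))"
    by (simp add: kernel_const_def diff_divide_distrib sum_subtractf sum_distrib_left sum_divide_distrib)
  also have "(\<Sum>i\<le>k. \<Sum>j\<le>k. rho_int l j * real (k - j) * (rho_coeff l (k - j) i / (real i * (real i * l + 1))))
      = (\<Sum>j\<le>k. rho_int l j * real (k - j) * kernel_const l (k - j))"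
    by (subst sum.swap) (simp add: kernel_const_eq_sum[of "k - _" k] sum_distrib_left)
  finally show ?thesis .
qed

definition rho_poly_fps :: "real \<Rightarrow> real poly fps" where
  "rho_poly_fps l = Abs_fps (rho_poly l)"

definition kernel_poly_fps :: "real \<Rightarrow> real poly fps" where
  "kernel_poly_fps l = Abs_fps (kernel_poly l)"

definition rho_int_fps :: "real \<Rightarrow> real poly fps" where
  "rho_int_fps l = Abs_fps (\<lambda>k. [:rho_int l k:])"

lemma pde_op_rho_int_fps_nth:
  "pde_op (rho_int_fps l) F $ n
    = euler_poly (F $ n) - of_nat n * F $ n + (\<Sum>j\<le>n. [:rho_int l j:] * (of_nat (n - j) * F $ (n - j)))"
proof -
  have "((1 - rho_int_fps l) * fps_euler F) $ n
      = fps_euler F $ n - (\<Sum>j=0..n. [:rho_int l j:] * fps_euler F $ (n - j))"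
    by (simp add: left_diff_distrib fps_mult_nth rho_int_fps_def del: fps_euler_nth)
  then have "((1 - rho_int_fps l) * fps_euler F) $ n
      = of_nat n * F $ n - (\<Sum>j\<le>n. [:rho_int l j:] * (of_nat (n - j) * F $ (n - j)))"
    by (simp add: atLeast0AtMost)
  then show ?thesis
    by (simp add: pde_op_def)
qed

lemma pde_op_rho_poly_fps: "pde_op (rho_int_fps l) (rho_poly_fps l) = 0"
proof (rule fps_ext)
  fix n
  have "coeff (pde_op (rho_int_fps l) (rho_poly_fps l) $ n) i = 0" for i
    using rho_coeff_euler_conv[of i l n]
    by (simp only: pde_op_rho_int_fps_nth) (simp add: coeff_euler_poly rho_poly_fps_def coeff_rho_poly of_nat_poly
        coeff_sum mult.assoc mult.left_commute)
  then show "pde_op (rho_int_fps l) (rho_poly_fps l) $ n = 0 $ n"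
    by (simp add: poly_eq_iff)
qed

lemma pde_op_kernel_poly_fps: "pde_op (rho_int_fps l) (kernel_poly_fps l) = - rho_int_fps l"
proof (rule fps_ext)
  fix n
  have "coeff (pde_op (rho_int_fps l) (kernel_poly_fps l) $ n) m = coeff ((- rho_int_fps l) $ n) m" for m
  proof (cases "m = 0")
    case True
    then show ?thesis
      using kernel_const_euler[of l n]
      by (simp only: pde_op_rho_int_fps_nth) (simp add: coeff_euler_poly kernel_poly_fps_def coeff_kernel_poly
          of_nat_poly coeff_sum rho_int_fps_def mult.assoc mult.left_commute)
  next
    case False
    have "(real m * rho_coeff l n m - real n * rho_coeff l n m
        + (\<Sum>j\<le>n. rho_int l j * real (n - j) * rho_coeff l (n - j) m)) / (real m * (real m * l + 1)) = 0"
      using rho_coeff_euler_conv[of m l n] by simp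
    moreover have "coeff [:- rho_int l n:] m = 0"
      using False by (cases m) auto
    ultimately show ?thesis
      using False
      by (simp only: pde_op_rho_int_fps_nth) (simp add: sum_negf coeff_euler_poly kernel_poly_fps_def coeff_kernel_poly
          of_nat_poly coeff_sum rho_int_fps_def add_divide_distrib diff_divide_distrib sum_divide_distrib
          mult.assoc mult.left_commute)
  qed
  then show "pde_op (rho_int_fps l) (kernel_poly_fps l) $ n = (- rho_int_fps l) $ n"
    by (simp add: poly_eq_iff)
qed

text \<open>The defect solves the homogeneous PDE and vanishes at \<open>t = 1\<close>.\<close>
lemma rho_poly_fps_ode:
  "fps_euler (rho_poly_fps l) = rho_poly_fps l + rho_poly_fps l * fps_euler (kernel_poly_fps l)"
proof -
  let ?Z = "fps_euler (rho_poly_fps l) - rho_poly_fps l - rho_poly_fps l * fps_euler (kernel_poly_fps l)"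
  have "?Z = 0"
  proof (rule pde_op_unique)
    show "rho_int_fps l $ 0 = 0"
      by (simp add: rho_int_fps_def)
    show "pde_op (rho_int_fps l) ?Z = - fps_euler (rho_int_fps l) * ?Z"
      by (rule pde_op_defect[OF pde_op_rho_poly_fps pde_op_kernel_poly_fps])
    have "poly ((rho_poly_fps l * fps_euler (kernel_poly_fps l)) $ n) 1 = 0" for n
      by (simp add: fps_mult_nth poly_sum kernel_poly_fps_def poly_kernel_poly_1 of_nat_poly)
    then show "poly (?Z $ n) 1 = 0" for n
      by (simp add: rho_poly_fps_def poly_rho_poly_1 of_nat_poly)
  qed
  then show ?thesis by (simp add: algebra_simps)
qed

definition fps_poly_eval :: "real \<Rightarrow> real poly fps \<Rightarrow> real fps" where
  "fps_poly_eval t F = Abs_fps (\<lambda>n. poly (F $ n) t)"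

lemma fps_poly_eval_nth [simp]: "fps_poly_eval t F $ n = poly (F $ n) t"
  by (simp add: fps_poly_eval_def)

lemma fps_poly_eval_mult: "fps_poly_eval t (F * G) = fps_poly_eval t F * fps_poly_eval t G"
  by (rule fps_ext) (simp add: fps_mult_nth poly_sum)

lemma fps_poly_eval_add: "fps_poly_eval t (F + G) = fps_poly_eval t F + fps_poly_eval t G"
  by (rule fps_ext) simp

lemma fps_poly_eval_fps_euler: "fps_poly_eval t (fps_euler F) = fps_euler (fps_poly_eval t F)"
  by (rule fps_ext) (simp add: of_nat_poly)

text \<open>The quotient \<open>R exp (-G)\<close> is fixed by \<open>z d/dz\<close>, hence a multiple of \<open>z\<close>.\<close>
lemma fps_euler_linear_ode_solution:
  fixes R G :: "real fps"
  assumes "R $ 0 = 0" "G $ 0 = 0" and ode: "fps_euler R = R + R * fps_euler G"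
  shows "R = fps_const (R $ 1) * fps_X * (fps_exp 1 oo G)"
proof -
  define E' where "E' = fps_exp (-1) oo G"
  define E where "E = fps_exp 1 oo G"
  have E'_deriv: "fps_deriv E' = - E' * fps_deriv G"
    unfolding E'_def using assms(2)
    by (simp add: fps_compose_deriv fps_compose_uminus fps_const_neg[symmetric] del: fps_const_neg)
  have "E' * E = 1"
  proof -
    have "fps_exp (-1) * fps_exp 1 = (1 :: real fps)"
      by (simp add: fps_exp_add_mult[symmetric])
    then show ?thesis
      unfolding E'_def E_def by (simp add: fps_compose_mult_distrib[OF assms(2), symmetric])
  qed
  then have R_eq: "R = (R * E') * E"
    by (simp add: mult.assoc)
  have fixed: "fps_euler (R * E') = R * E'"
    using ode E'_deriv by (simp add: fps_euler_mult fps_euler_def algebra_simps)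
  have "(R * E') $ n = 0" if "n \<noteq> 1" for n
    using arg_cong[OF fixed, of "\<lambda>F. F $ n"] that by (cases "(R * E') $ n = 0") auto
  moreover have "(R * E') $ 1 = R $ 1"
    by (simp add: fps_mult_nth assms(1) E'_def sum.atLeast0_atMost_Suc)
  ultimately have "R * E' = fps_const (R $ 1) * fps_X"
    by (intro fps_ext) (auto simp: fps_X_def)
  then show ?thesis
    using R_eq unfolding E_def by simp
qed

lemma poly_rho_poly_exp_series:
  "poly (rho_poly l (Suc n)) t = t * (\<Sum>m=0..n. (fps_poly_eval t (kernel_poly_fps l) ^ m) $ n / fact m)"
proof -
  define R where "R = fps_poly_eval t (rho_poly_fps l)"
  define G where "G = fps_poly_eval t (kernel_poly_fps l)"
  have "fps_euler R = R + R * fps_euler G"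
    using arg_cong[OF rho_poly_fps_ode[of l], of "fps_poly_eval t"]
    by (simp add: R_def G_def fps_poly_eval_add fps_poly_eval_mult fps_poly_eval_fps_euler)
  moreover have "R $ 0 = 0" "G $ 0 = 0" "R $ 1 = t"
    by (simp_all add: R_def G_def rho_poly_fps_def kernel_poly_fps_def rho_poly_def kernel_poly_def
        rho_coeff.simps poly_monom)
  ultimately have "R = fps_const t * fps_X * (fps_exp 1 oo G)"
    using fps_euler_linear_ode_solution[of R G] by simp
  then have "R $ Suc n = t * (fps_exp 1 oo G) $ n"
    by (simp add: mult.assoc)
  then show ?thesis
    by (simp add: R_def rho_poly_fps_def fps_compose_nth G_def)
qed

section \<open>Compositions\<close>

lemma compositions_nth_bounds:
  assumes "ks \<in> compositions n m" "i < m"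
  shows "1 \<le> ks ! i" "ks ! i \<le> n"
proof -
  have "ks ! i \<in> set ks" using assms by (auto simp: compositions_def)
  then show "1 \<le> ks ! i" "ks ! i \<le> n"
    using assms(1) member_le_sum_list[of "ks ! i" ks] by (auto simp: compositions_def)
qed

lemma compositions_Suc:
  "compositions n (Suc m) = (\<Union>j\<in>{1..n}. (#) j ` compositions (n - j) m)"
proof (intro set_eqI iffI)
  fix ks assume "ks \<in> compositions n (Suc m)"
  then obtain j ks' where "ks = j # ks'" "length ks' = m" "1 \<le> j" "\<forall>k\<in>set ks'. 1 \<le> k"
      "j + sum_list ks' = n"
    by (cases ks) (auto simp: compositions_def)
  then show "ks \<in> (\<Union>j\<in>{1..n}. (#) j ` compositions (n - j) m)"
    by (auto simp: compositions_def intro!: bexI[of _ j])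
qed (auto simp: compositions_def)

lemma finite_compositions: "finite (compositions n m)"
proof (rule finite_subset)
  show "compositions n m \<subseteq> {ks. set ks \<subseteq> {..n} \<and> length ks = m}"
    by (auto simp: compositions_def dest: member_le_sum_list)
qed (rule finite_lists_length_eq, simp)

lemma sum_compositions_prod_eq_fps_power:
  fixes g :: "nat \<Rightarrow> 'a :: comm_semiring_1"
  assumes "g 0 = 0"
  shows "(\<Sum>ks\<in>compositions n m. \<Prod>i<m. g (ks ! i)) = (Abs_fps g ^ m) $ n"
proof (induction m arbitrary: n)
  case 0
  have "compositions n 0 = (if n = 0 then {[]} else {})"
    by (auto simp: compositions_def)
  then show ?case by simp
next
  case (Suc m)
  have "(\<Sum>ks\<in>compositions n (Suc m). \<Prod>i<Suc m. g (ks ! i))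
      = (\<Sum>j\<in>{1..n}. \<Sum>ks\<in>(#) j ` compositions (n - j) m. \<Prod>i<Suc m. g (ks ! i))"
    unfolding compositions_Suc
    by (rule sum.UNION_disjoint) (auto simp: finite_compositions)
  also have "\<dots> = (\<Sum>j\<in>{1..n}. g j * (\<Sum>ks\<in>compositions (n - j) m. \<Prod>i<m. g (ks ! i)))"
    by (intro sum.cong refl)
       (simp add: sum.reindex inj_on_def prod.lessThan_Suc_shift sum_distrib_left
             del: prod.lessThan_Suc)
  also have "\<dots> = (\<Sum>j=0..n. g j * (Abs_fps g ^ m) $ (n - j))"
    by (simp add: Suc.IH, rule sum.mono_neutral_left) (auto simp: assms not_less_eq_eq)
  also have "\<dots> = (Abs_fps g ^ Suc m) $ n"
    by (simp add: fps_mult_nth)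
  finally show ?case .
qed

section \<open>The one-generation decomposition\<close>

lemma rho_step_cong:
  assumes "\<And>i. i < k \<Longrightarrow> r i = r' i"
  shows "rho_step K r k = rho_step K r' k"
proof (rule ext)
  fix x
  have "(LINT y:{0<..1}|lborel. K x y / kernel_mass K x * r (ks ! i) y)
      = (LINT y:{0<..1}|lborel. K x y / kernel_mass K x * r' (ks ! i) y)"
    if "ks \<in> compositions (k - 1) m" "k \<noteq> 0" "i < m" for ks m i
    using compositions_nth_bounds(2)[OF that(1,3)] that(2) assms by simp
  then show "rho_step K r k x = rho_step K r' k x"
    unfolding rho_step_def by (auto intro!: sum.cong prod.cong)
qed

lemma rho_step_iterate_stable:
  "j \<le> n \<Longrightarrow> (rho_step K ^^ n) (\<lambda>_ _. 0) j = (rho_step K ^^ j) (\<lambda>_ _. 0) j"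
proof (induction j arbitrary: n rule: less_induct)
  case (less j)
  show ?case
  proof (cases j)
    case 0
    then show ?thesis by (cases n) (auto simp: rho_step_def)
  next
    case (Suc j')
    then obtain n' where n: "n = Suc n'" using less.prems by (cases n) auto
    have "rho_step K ((rho_step K ^^ n') (\<lambda>_ _. 0)) j = rho_step K ((rho_step K ^^ j') (\<lambda>_ _. 0)) j"
    proof (rule rho_step_cong)
      fix i assume "i < j"
      then show "(rho_step K ^^ n') (\<lambda>_ _. 0) i = (rho_step K ^^ j') (\<lambda>_ _. 0) i"
        using less.IH[of i n'] less.IH[of i j'] less.prems n Suc by simp
    qed
    then show ?thesis using n Suc by simp
  qed
qed

lemma rho_x_unfold: "rho_x K k x = rho_step K (rho_x K) k x"
proof (cases k)
  case 0
  then show ?thesis by (simp add: rho_x_def rho_step_def)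
next
  case (Suc k')
  have "rho_step K ((rho_step K ^^ k') (\<lambda>_ _. 0)) k = rho_step K (rho_x K) k"
  proof (rule rho_step_cong)
    fix i assume "i < k"
    then show "(rho_step K ^^ k') (\<lambda>_ _. 0) i = rho_x K i"
      using rho_step_iterate_stable[of i k' K] Suc by (auto simp: rho_x_def[abs_def])
  qed
  then show ?thesis using Suc by (simp add: rho_x_def)
qed

text \<open>With \<open>g j\<close> the mass of the kernel weighted by \<open>r j\<close>, the Poisson mixture over the number of
  children becomes a coefficient of \<open>exp (Abs_fps g)\<close>.\<close>
lemma rho_step_exp_series:
  fixes g :: "nat \<Rightarrow> real"
  assumes "1 \<le> k" "g 0 = 0"
    and g: "\<And>j. 1 \<le> j \<Longrightarrow> j < k \<Longrightarrow>
      kernel_mass K x * (LINT y:{0<..1}|lborel. K x y / kernel_mass K x * r j y) = g j"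
  shows "rho_step K r k x = exp (- kernel_mass K x) * (\<Sum>m<k. (Abs_fps g ^ m) $ (k - 1) / fact m)"
proof -
  define M where "M = kernel_mass K x"
  define c where "c j = (LINT y:{0<..1}|lborel. K x y / M * r j y)" for j
  have gc: "M * c j = g j" if "1 \<le> j" "j < k" for j
    using g[OF that] unfolding M_def c_def .
  have power_sum: "M ^ m * (\<Sum>ks\<in>compositions (k - 1) m. \<Prod>i<m. c (ks ! i)) = (Abs_fps g ^ m) $ (k - 1)"
    for m
  proof -
    have "M ^ m * (\<Prod>i<m. c (ks ! i)) = (\<Prod>i<m. g (ks ! i))" if "ks \<in> compositions (k - 1) m" for ks
    proof -
      have "M ^ m * (\<Prod>i<m. c (ks ! i)) = (\<Prod>i<m. M * c (ks ! i))"
        by (simp only: prod.distrib prod_constant card_lessThan)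
      also have "\<dots> = (\<Prod>i<m. g (ks ! i))"
      proof (intro prod.cong refl gc)
        fix i assume "i \<in> {..<m}"
        then show "1 \<le> ks ! i" "ks ! i < k"
          using compositions_nth_bounds[OF that, of i] assms(1) by auto
      qed
      finally show ?thesis .
    qed
    then show ?thesis
      by (simp add: sum_distrib_left sum_compositions_prod_eq_fps_power[where g = g, OF assms(2), symmetric])
  qed
  have "rho_step K r k x = (\<Sum>m<k. exp (- M) * M ^ m / fact m * (\<Sum>ks\<in>compositions (k - 1) m. \<Prod>i<m. c (ks ! i)))"
    using assms(1) unfolding rho_step_def M_def[symmetric] c_def by simp
  also have "\<dots> = (\<Sum>m<k. exp (- M) * ((Abs_fps g ^ m) $ (k - 1) / fact m))"
    unfolding power_sum[symmetric] by (simp add: mult.assoc)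
  finally show ?thesis by (simp add: M_def sum_distrib_left)
qed

section \<open>Integrals against the kernel\<close>

lemma set_integral_Ioc_eq_diff:
  fixes f F :: "real \<Rightarrow> real"
  assumes "a \<le> b" "continuous_on {a..b} f" "continuous_on {a..b} F"
    and F: "\<And>y. a < y \<Longrightarrow> y < b \<Longrightarrow> (F has_real_derivative f y) (at y)"
  shows "set_integrable lborel {a<..b} f \<and> (LINT y:{a<..b}|lborel. f y) = F b - F a"
proof -
  have int: "set_integrable lborel {a..b} f"
    by (rule borel_integrable_atLeastAtMost'[OF assms(2)])
  have "(f has_integral (F b - F a)) {a..b}"
    by (rule fundamental_theorem_of_calculus_interior[OF assms(1,3)])
       (use F in \<open>auto simp flip: has_real_derivative_iff_has_vector_derivative\<close>)
  then have "(LINT y:{a..b}|lborel. f y) = F b - F a"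
    using set_borel_integral_eq_integral(2)[OF int] by (simp add: integral_unique)
  moreover have int': "set_integrable lborel {a<..b} f"
    by (rule set_integrable_subset[OF int]) auto
  moreover have "(LINT y:{a<..b}|lborel. f y) = (LINT y:{a..b}|lborel. f y)"
  proof (rule set_integral_cong_set)
    show "set_borel_measurable lborel {a..b} f" "set_borel_measurable lborel {a<..b} f"
      using int int' unfolding set_integrable_def set_borel_measurable_def
      by (auto intro: borel_measurable_integrable)
  qed (use AE_lborel_singleton[of a] in auto)
  ultimately show ?thesis by simp
qed

lemma set_integral_sum:
  fixes f :: "'i \<Rightarrow> 'a \<Rightarrow> real"
  assumes "finite I" "\<And>i. i \<in> I \<Longrightarrow> set_integrable M A (f i)"
  shows "set_integrable M A (\<lambda>y. \<Sum>i\<in>I. f i y) \<and>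
    (LINT y:A|M. (\<Sum>i\<in>I. f i y)) = (\<Sum>i\<in>I. LINT y:A|M. f i y)"
  using assms
proof (induction I rule: finite_induct)
  case empty
  then show ?case by (simp add: set_integrable_def)
next
  case (insert a I)
  then show ?case by simp
qed

lemma set_integral_powr_Ioc01:
  fixes a :: real
  assumes "0 < a"
  shows "set_integrable lborel {0<..1} (\<lambda>y. y powr a) \<and> (LINT y:{0<..1}|lborel. y powr a) = 1 / (a + 1)"
proof -
  have "set_integrable lborel {0<..1} (\<lambda>y. y powr a) \<and>
    (LINT y:{0<..1}|lborel. y powr a) = 1 powr (a + 1) / (a + 1) - 0 powr (a + 1) / (a + 1)"
  proof (rule set_integral_Ioc_eq_diff)
    show "continuous_on {0..1} (\<lambda>y. y powr a)" "continuous_on {0..1} (\<lambda>y. y powr (a + 1) / (a + 1))"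
      using assms by (intro continuous_intros continuous_on_powr'; simp)+
    show "((\<lambda>y. y powr (a + 1) / (a + 1)) has_real_derivative y powr a) (at y)" if "0 < y" "y < 1" for y
      using has_real_derivative_powr[OF that(1), of "a + 1"] that assms
      by (auto intro!: derivative_eq_intros)
  qed simp
  then show ?thesis by simp
qed

lemma kappa_below [simp]: "y \<le> x \<Longrightarrow> kappa x y = 1 / x - 1"
  and kappa_above [simp]: "x \<le> y \<Longrightarrow> kappa x y = 1 / y - 1"
  by (simp_all add: kappa_def max_def)

lemma kernel_mass_kappa:
  fixes l x :: real
  assumes x: "0 < x" "x \<le> 1"
  shows "kernel_mass (\<lambda>x y. l * kappa x y) x = - l * ln x"
proof -
  let ?f = "\<lambda>y. l * kappa x y"
  have below: "set_integrable lborel {0<..x} ?f \<and> (LINT y:{0<..x}|lborel. ?f y) = l * (1/x - 1) * x - l * (1/x - 1) * 0"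
  proof (rule set_integral_Ioc_eq_diff)
    show "continuous_on {0..x} ?f"
      by (rule continuous_on_eq[OF continuous_on_const[of _ "l * (1/x - 1)"]]) simp
    show "continuous_on {0..x} (\<lambda>y. l * (1/x - 1) * y)"
      by (intro continuous_intros)
    show "((\<lambda>y. l * (1/x - 1) * y) has_real_derivative ?f y) (at y)" if "y < x" for y
      using that by (auto intro!: derivative_eq_intros)
  qed (use x in simp)
  have above: "set_integrable lborel {x<..1} ?f \<and> (LINT y:{x<..1}|lborel. ?f y) = l * (ln 1 - 1) - l * (ln x - x)"
  proof (rule set_integral_Ioc_eq_diff)
    have "continuous_on {x..1} (\<lambda>y. l * (1 / y - 1))"
      using x by (intro continuous_intros) auto
    then show "continuous_on {x..1} ?f"
      by (rule continuous_on_eq) simp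
    show "continuous_on {x..1} (\<lambda>y. l * (ln y - y))"
      using x by (intro continuous_intros) auto
    show "((\<lambda>y. l * (ln y - y)) has_real_derivative ?f y) (at y)" if "x < y" for y
      using that x by (auto intro!: derivative_eq_intros)
  qed (use x in simp)
  have "{0<..1} = {0<..x} \<union> {x<..1::real}" using x by auto
  then have "kernel_mass (\<lambda>x y. l * kappa x y) x = (LINT y:{0<..x} \<union> {x<..1}|lborel. ?f y)"
    by (simp only: kernel_mass_def)
  also have "\<dots> = (LINT y:{0<..x}|lborel. ?f y) + (LINT y:{x<..1}|lborel. ?f y)"
    by (rule set_integral_Un) (use below above in auto)
  also have "\<dots> = l * (1/x - 1) * x - l * (1/x - 1) * 0 + (l * (ln 1 - 1) - l * (ln x - x))"
    using below above by (simp only:)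
  also have "\<dots> = - l * ln x"
    using x by (simp add: field_simps)
  finally show ?thesis .
qed

lemma set_integral_kappa_powr:
  fixes l x a :: real
  assumes x: "0 < x" "x \<le> 1" and a: "0 < a"
  shows "set_integrable lborel {0<..1} (\<lambda>y. l * kappa x y * y powr a) \<and>
    (LINT y:{0<..1}|lborel. l * kappa x y * y powr a) = l * (1 - x powr a) / (a * (a + 1))"
proof -
  let ?f = "\<lambda>y. l * kappa x y * y powr a"
  have below: "set_integrable lborel {0<..x} ?f \<and> (LINT y:{0<..x}|lborel. ?f y)
      = l * (1/x - 1) * x powr (a + 1) / (a + 1) - l * (1/x - 1) * 0 powr (a + 1) / (a + 1)"
  proof (rule set_integral_Ioc_eq_diff)
    have "continuous_on {0..x} (\<lambda>y. l * (1/x - 1) * y powr a)"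
      using a by (intro continuous_intros continuous_on_powr') auto
    then show "continuous_on {0..x} ?f"
      by (rule continuous_on_eq) simp
    show "continuous_on {0..x} (\<lambda>y. l * (1/x - 1) * y powr (a + 1) / (a + 1))"
      using a by (intro continuous_intros continuous_on_powr') auto
    show "((\<lambda>y. l * (1/x - 1) * y powr (a + 1) / (a + 1)) has_real_derivative ?f y) (at y)"
      if "0 < y" "y < x" for y
      using has_real_derivative_powr[OF that(1), of "a + 1"] that a
      by (auto intro!: derivative_eq_intros)
  qed (use x in simp)
  have above: "set_integrable lborel {x<..1} ?f \<and> (LINT y:{x<..1}|lborel. ?f y)
      = l * (1 powr a / a - 1 powr (a + 1) / (a + 1)) - l * (x powr a / a - x powr (a + 1) / (a + 1))"
  proof (rule set_integral_Ioc_eq_diff)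
    have "continuous_on {x..1} (\<lambda>y. l * (1 / y - 1) * y powr a)"
      using x by (intro continuous_intros) auto
    then show "continuous_on {x..1} ?f"
      by (rule continuous_on_eq) simp
    show "continuous_on {x..1} (\<lambda>y. l * (y powr a / a - y powr (a + 1) / (a + 1)))"
      using x a by (intro continuous_intros continuous_on_powr') auto
    show "((\<lambda>y. l * (y powr a / a - y powr (a + 1) / (a + 1))) has_real_derivative ?f y) (at y)"
      if "x < y" "y < 1" for y
    proof -
      have "0 < y" using that x by simp
      have "((\<lambda>y. l * (y powr a / a - y powr (a + 1) / (a + 1))) has_real_derivative
          l * (a * y powr (a - 1) / a - (a + 1) * y powr (a + 1 - 1) / (a + 1))) (at y)"
        by (intro DERIV_cmult DERIV_diff DERIV_cdivide has_real_derivative_powr \<open>0 < y\<close>)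
      moreover have "y powr (a - 1) = y powr a / y"
        using \<open>0 < y\<close> by (simp add: powr_diff)
      then have "l * (a * y powr (a - 1) / a - (a + 1) * y powr (a + 1 - 1) / (a + 1)) = ?f y"
        using that x a by (simp add: field_simps)
      ultimately show ?thesis by (rule DERIV_cong)
    qed
  qed (use x in simp)
  have U: "{0<..1} = {0<..x} \<union> {x<..1::real}" using x by auto
  have "set_integrable lborel {0<..1} ?f"
    unfolding U using below above by (intro set_integrable_Un) auto
  moreover have "(LINT y:{0<..1}|lborel. ?f y) = (LINT y:{0<..x}|lborel. ?f y) + (LINT y:{x<..1}|lborel. ?f y)"
    unfolding U using below above by (intro set_integral_Un) auto
  moreover have "\<dots> = l * (1/x - 1) * x powr (a + 1) / (a + 1) + (l * (1/a - 1/(a + 1)) - l * (x powr a / a - x powr (a + 1) / (a + 1)))"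
    using below above by simp
  moreover have "\<dots> = l * (1 - x powr a) / (a * (a + 1))"
  proof -
    have "a \<noteq> 0" "a + 1 \<noteq> 0" "x \<noteq> 0" using x a by auto
    moreover have "x powr (a + 1) = x powr a * x" using x by (simp add: powr_add)
    ultimately show ?thesis by (simp add: divide_simps) (simp add: algebra_simps)
  qed
  ultimately show ?thesis by simp
qed

lemma poly_rho_poly_powr:
  "0 < y \<Longrightarrow> poly (rho_poly l j) (y powr l) = (\<Sum>i\<in>{1..j}. rho_coeff l j i * y powr (real i * l))"
  unfolding rho_poly_def poly_sum poly_monom
  by (rule sum.mono_neutral_cong_right) (auto simp: powr_power mult.commute not_less_eq_eq)

lemma poly_kernel_poly_powr:
  "0 < x \<Longrightarrow> poly (kernel_poly l j) (x powr l)
    = (\<Sum>i\<in>{1..j}. rho_coeff l j i / (real i * (real i * l + 1)) * (1 - x powr (real i * l)))"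
  unfolding kernel_poly_def poly_sum
  by (rule sum.mono_neutral_cong_right) (auto simp: poly_monom powr_power mult.commute not_less_eq_eq)

lemma set_integral_rho_poly:
  assumes "0 < l"
  shows "(LINT y:{0<..1}|lborel. poly (rho_poly l j) (y powr l)) = rho_int l j"
proof -
  let ?g = "\<lambda>i y. rho_coeff l j i * y powr (real i * l)"
  have summand: "set_integrable lborel {0<..1} (?g i) \<and> (LINT y:{0<..1}|lborel. ?g i y) = rho_coeff l j i / (real i * l + 1)"
    if "i \<in> {1..j}" for i
    using set_integral_powr_Ioc01[of "real i * l"] that assms by (simp add: add.commute)
  have "(LINT y:{0<..1}|lborel. poly (rho_poly l j) (y powr l)) = (LINT y:{0<..1}|lborel. (\<Sum>i\<in>{1..j}. ?g i y))"
    by (rule set_lebesgue_integral_cong) (auto simp: poly_rho_poly_powr)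
  also have "\<dots> = (\<Sum>i\<in>{1..j}. rho_coeff l j i / (real i * l + 1))"
    using set_integral_sum[of "{1..j}" lborel "{0<..1}" ?g] summand by simp
  also have "\<dots> = rho_int l j"
    unfolding rho_int_def by (rule sum.mono_neutral_left) (auto simp: not_less_eq_eq)
  finally show ?thesis .
qed

lemma set_integral_kappa_rho_poly:
  assumes "0 < l" "0 < x" "x \<le> 1"
  shows "(LINT y:{0<..1}|lborel. l * kappa x y * poly (rho_poly l j) (y powr l)) = poly (kernel_poly l j) (x powr l)"
proof -
  let ?g = "\<lambda>i y. rho_coeff l j i * (l * kappa x y * y powr (real i * l))"
  have summand: "set_integrable lborel {0<..1} (?g i) \<and> (LINT y:{0<..1}|lborel. ?g i y)
     = rho_coeff l j i / (real i * (real i * l + 1)) * (1 - x powr (real i * l))"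
    if "i \<in> {1..j}" for i
  proof -
    have "0 < real i * l" using that assms by simp
    from set_integral_kappa_powr[OF assms(2,3) this, of l]
    have int: "set_integrable lborel {0<..1} (\<lambda>y. l * kappa x y * y powr (real i * l))"
      and "(LINT y:{0<..1}|lborel. l * kappa x y * y powr (real i * l))
        = l * (1 - x powr (real i * l)) / (l * (real i * (real i * l + 1)))"
      by (simp_all only: mult_ac)
    then have val: "(LINT y:{0<..1}|lborel. l * kappa x y * y powr (real i * l))
        = (1 - x powr (real i * l)) / (real i * (real i * l + 1))"
      using assms(1) by simp
    show ?thesis
      using set_integrable_mult_right[OF int, of "rho_coeff l j i"]
      by (simp add: val)
  qed
  have "(LINT y:{0<..1}|lborel. l * kappa x y * poly (rho_poly l j) (y powr l))
      = (LINT y:{0<..1}|lborel. (\<Sum>i\<in>{1..j}. ?g i y))"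
    by (rule set_lebesgue_integral_cong) (auto simp: poly_rho_poly_powr sum_distrib_left mult.left_commute)
  also have "\<dots> = (\<Sum>i\<in>{1..j}. rho_coeff l j i / (real i * (real i * l + 1)) * (1 - x powr (real i * l)))"
    using set_integral_sum[of "{1..j}" lborel "{0<..1}" ?g] summand by simp
  also have "\<dots> = poly (kernel_poly l j) (x powr l)"
    using poly_kernel_poly_powr[OF assms(2)] by simp
  finally show ?thesis .
qed

theorem rho_x_kappa_eq_rho_poly:
  assumes l: "0 < l" and "1 \<le> k" "x \<in> {0<..1}"
  shows "rho_x (\<lambda>x y. l * kappa x y) k x = poly (rho_poly l k) (x powr l)"
  using assms(2,3)
proof (induction k arbitrary: x rule: less_induct)
  case (less k)
  define K where "K = (\<lambda>x y. l * kappa x y)"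
  define t where "t = x powr l"
  have x: "0 < x" "x \<le> 1" using less.prems by auto
  have mass: "kernel_mass K x = - l * ln x"
    unfolding K_def by (rule kernel_mass_kappa[OF x])
  have "rho_x K k x = rho_step K (rho_x K) k x"
    by (rule rho_x_unfold)
  also have "\<dots> = exp (- kernel_mass K x) * (\<Sum>m<k. (Abs_fps (\<lambda>j. poly (kernel_poly l j) t) ^ m) $ (k - 1) / fact m)"
  proof (rule rho_step_exp_series[OF less.prems(1)])
    show "poly (kernel_poly l 0) t = 0"
      by (simp add: kernel_poly_def)
    fix j assume j: "1 \<le> j" "j < k"
    show "kernel_mass K x * (LINT y:{0<..1}|lborel. K x y / kernel_mass K x * rho_x K j y) = poly (kernel_poly l j) t"
    proof (cases "kernel_mass K x = 0")
      case True
      \<comment> \<open>only at \<open>x = 1\<close>, where both sides vanish (the division by zero yields \<open>0\<close>)\<close>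
      then have "x = 1" using mass x l by simp
      then show ?thesis using True by (simp add: t_def poly_kernel_poly_1)
    next
      case False
      have "(LINT y:{0<..1}|lborel. K x y / kernel_mass K x * rho_x K j y)
          = (LINT y:{0<..1}|lborel. 1 / kernel_mass K x * (l * kappa x y * poly (rho_poly l j) (y powr l)))"
        by (rule set_lebesgue_integral_cong) (use j less.IH in \<open>auto simp: K_def\<close>)
      also have "\<dots> = 1 / kernel_mass K x * poly (kernel_poly l j) t"
        by (simp only: set_integral_mult_right set_integral_kappa_rho_poly[OF l x] t_def)
      finally show ?thesis using False by simp
    qed
  qed
  also have "exp (- kernel_mass K x) = t"
    using x by (simp add: mass t_def powr_def)
  also have "Abs_fps (\<lambda>j. poly (kernel_poly l j) t) = fps_poly_eval t (kernel_poly_fps l)"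
    by (simp add: fps_poly_eval_def kernel_poly_fps_def)
  also have "t * (\<Sum>m<k. (fps_poly_eval t (kernel_poly_fps l) ^ m) $ (k - 1) / fact m) = poly (rho_poly l k) t"
  proof -
    obtain n where "k = Suc n" using less.prems(1) by (cases k) auto
    then show ?thesis
      using poly_rho_poly_exp_series[of l n t] by (simp add: atLeast0AtMost lessThan_Suc_atMost)
  qed
  finally show ?case
    unfolding K_def t_def .
qed

section \<open>Rational dependence on \<open>\<lambda>\<close>\<close>

definition rational_poles_in :: "real set \<Rightarrow> (real \<Rightarrow> real) \<Rightarrow> bool" where
  "rational_poles_in S f \<longleftrightarrow>
    (\<exists>P Q. Q \<noteq> 0 \<and> (\<forall>z. poly Q z = 0 \<longrightarrow> z \<in> S) \<and> (\<forall>l>0. f l = poly P l / poly Q l))"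

definition pole_set :: "nat \<Rightarrow> real set" where
  "pole_set k = {z. \<exists>j\<in>{1..k}. z = - 1 / real j}"

lemma pole_set_nonpos: "z \<in> pole_set k \<Longrightarrow> z \<le> 0"
  by (auto simp: pole_set_def)

lemma pole_set_mono: "m \<le> k \<Longrightarrow> pole_set m \<subseteq> pole_set k"
  by (auto simp: pole_set_def)

lemma rational_poles_in_cong: "rational_poles_in S f \<Longrightarrow> (\<And>l. 0 < l \<Longrightarrow> f l = g l) \<Longrightarrow> rational_poles_in S g"
  unfolding rational_poles_in_def by metis

lemma rational_poles_in_mono: "rational_poles_in S f \<Longrightarrow> S \<subseteq> T \<Longrightarrow> rational_poles_in T f"
  unfolding rational_poles_in_def by blast

lemma rational_poles_in_const: "rational_poles_in S (\<lambda>_. c)"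
  unfolding rational_poles_in_def by (intro exI[of _ "[:c:]"] exI[of _ 1]) auto

lemma rational_poles_in_inverse: "0 < i \<Longrightarrow> rational_poles_in {- 1 / real i} (\<lambda>l. 1 / (real i * l + 1))"
  unfolding rational_poles_in_def
  by (intro exI[of _ 1] exI[of _ "[:1, real i:]"]) (auto simp: field_simps)

lemma rational_poles_in_mult:
  assumes "rational_poles_in S f" "rational_poles_in S g"
  shows "rational_poles_in S (\<lambda>l. f l * g l)"
proof -
  obtain P1 Q1 where 1: "Q1 \<noteq> 0" "\<forall>z. poly Q1 z = 0 \<longrightarrow> z \<in> S" "\<forall>l>0. f l = poly P1 l / poly Q1 l"
    using assms(1) unfolding rational_poles_in_def by blast
  obtain P2 Q2 where 2: "Q2 \<noteq> 0" "\<forall>z. poly Q2 z = 0 \<longrightarrow> z \<in> S" "\<forall>l>0. g l = poly P2 l / poly Q2 l"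
    using assms(2) unfolding rational_poles_in_def by blast
  show ?thesis
    unfolding rational_poles_in_def using 1 2
    by (intro exI[of _ "P1 * P2"] exI[of _ "Q1 * Q2"]) auto
qed

text \<open>Adding needs the denominators to be nonzero on \<open>l > 0\<close>, hence the sign condition on \<open>S\<close>.\<close>
lemma rational_poles_in_add:
  assumes S: "\<And>z. z \<in> S \<Longrightarrow> z \<le> 0" and "rational_poles_in S f" "rational_poles_in S g"
  shows "rational_poles_in S (\<lambda>l. f l + g l)"
proof -
  obtain P1 Q1 where 1: "Q1 \<noteq> 0" "\<forall>z. poly Q1 z = 0 \<longrightarrow> z \<in> S" "\<forall>l>0. f l = poly P1 l / poly Q1 l"
    using assms(2) unfolding rational_poles_in_def by blast
  obtain P2 Q2 where 2: "Q2 \<noteq> 0" "\<forall>z. poly Q2 z = 0 \<longrightarrow> z \<in> S" "\<forall>l>0. g l = poly P2 l / poly Q2 l"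
    using assms(3) unfolding rational_poles_in_def by blast
  have "poly Q1 l \<noteq> 0" "poly Q2 l \<noteq> 0" if "0 < l" for l
    using 1(2) 2(2) S[of l] that by force+
  then show ?thesis
    unfolding rational_poles_in_def using 1 2
    by (intro exI[of _ "P1 * Q2 + P2 * Q1"] exI[of _ "Q1 * Q2"]) (auto simp: field_simps)
qed

lemma rational_poles_in_sum:
  assumes "\<And>z. z \<in> S \<Longrightarrow> z \<le> 0" "\<And>i. i \<in> I \<Longrightarrow> rational_poles_in S (f i)"
  shows "rational_poles_in S (\<lambda>l. \<Sum>i\<in>I. f i l)"
  using assms(2)
  by (induction I rule: infinite_finite_induct)
     (simp_all add: rational_poles_in_const rational_poles_in_add[OF assms(1)])

lemma rational_rho_coeff_rho_int:
  "(\<forall>i. rational_poles_in (pole_set k) (\<lambda>l. rho_coeff l k i)) \<and> rational_poles_in (pole_set k) (\<lambda>l. rho_int l k)"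
proof (induction k rule: less_induct)
  case (less k)
  note nonpos = pole_set_nonpos[of _ k]
  have lower: "rational_poles_in (pole_set k) (\<lambda>l. rho_coeff l j i)"
    "rational_poles_in (pole_set k) (\<lambda>l. rho_int l j)" if "j < k" for j i
    using less.IH[OF that] pole_set_mono[of j k] that by (auto intro: rational_poles_in_mono)
  have below_diag: "rational_poles_in (pole_set k) (\<lambda>l. rho_coeff l k i)" if "i < k" for i
  proof (cases "2 \<le> k \<and> 1 \<le> i")
    case True
    have "rational_poles_in (pole_set k)
        (\<lambda>l. (\<Sum>j=1..k-1. real j * rho_int l (k-j) * rho_coeff l j i) * (1 / real (k - i)))"
      by (intro rational_poles_in_mult rational_poles_in_sum[OF nonpos] rational_poles_in_const lower) auto
    then show ?thesis
      by (rule rational_poles_in_cong) (use True that in \<open>simp add: rho_coeff_below_diag\<close>)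
  next
    case False
    then have "rho_coeff l k i = 0" for l
      using that by (auto simp: rho_coeff.simps)
    then show ?thesis
      using rational_poles_in_const by simp
  qed
  have coeff: "rational_poles_in (pole_set k) (\<lambda>l. rho_coeff l k i)" for i
  proof -
    consider "i < k" | "i = k" "k \<le> 1" | "i = k" "2 \<le> k" | "k < i" by linarith
    then show ?thesis
    proof cases
      case 2
      then have "rho_coeff l k i = (if k = 1 then 1 else 0)" for l
        by (auto simp: rho_coeff.simps)
      then show ?thesis
        using rational_poles_in_const by simp
    next
      case 3
      have "rational_poles_in (pole_set k) (\<lambda>l. (\<Sum>i'<k. rho_coeff l k i') * (-1))"
        by (intro rational_poles_in_mult rational_poles_in_sum[OF nonpos] rational_poles_in_const below_diag) auto
      then show ?thesis
        by (rule rational_poles_in_cong) (simp add: rho_coeff_diag 3)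
    qed (simp_all add: below_diag rho_coeff_eq_0 rational_poles_in_const)
  qed
  have "rational_poles_in (pole_set k) (\<lambda>l. \<Sum>i\<le>k. rho_coeff l k i * (if i = 0 then 0 else 1 / (real i * l + 1)))"
  proof (intro rational_poles_in_sum[OF nonpos] rational_poles_in_mult coeff)
    fix i assume "i \<in> {..k}"
    then have "{- 1 / real i} \<subseteq> pole_set k" if "i \<noteq> 0"
      using that by (auto simp: pole_set_def)
    then show "rational_poles_in (pole_set k) (\<lambda>l. if i = 0 then 0 else 1 / (real i * l + 1))"
      by (cases "i = 0") (auto intro: rational_poles_in_const rational_poles_in_mono[OF rational_poles_in_inverse])
  qed
  then have "rational_poles_in (pole_set k) (\<lambda>l. rho_int l k)"
    by (rule rational_poles_in_cong) (auto simp: rho_int_def intro!: sum.cong)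
  with coeff show ?case by blast
qed

lemma rho_kappa_eq_rho_int:
  assumes "0 < l" "1 \<le> k"
  shows "rho (\<lambda>x y. l * kappa x y) k = rho_int l k"
proof -
  have "rho (\<lambda>x y. l * kappa x y) k = (LINT y:{0<..1}|lborel. poly (rho_poly l k) (y powr l))"
    unfolding rho_def by (rule set_lebesgue_integral_cong) (use rho_x_kappa_eq_rho_poly[OF assms] in auto)
  also have "\<dots> = rho_int l k"
    by (rule set_integral_rho_poly[OF assms(1)])
  finally show ?thesis .
qed

lemma rho_kappa_rec:
  assumes "0 < l" "2 \<le> k"
  shows "rho (\<lambda>x y. l * kappa x y) k = real k * l / (2 * (1 + real k * l)) *
    (\<Sum>j=1..k-1. rho (\<lambda>x y. l * kappa x y) (k - j) * rho (\<lambda>x y. l * kappa x y) j)"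
proof -
  have "(\<Sum>j=1..k-1. rho (\<lambda>x y. l * kappa x y) (k - j) * rho (\<lambda>x y. l * kappa x y) j)
      = (\<Sum>j=1..k-1. rho_int l (k - j) * rho_int l j)"
    by (intro sum.cong refl) (auto simp: rho_kappa_eq_rho_int[OF assms(1)])
  then show ?thesis
    using rho_int_rec[OF assms] rho_kappa_eq_rho_int[OF assms(1), of k] assms(2) by simp
qed

lemma rho_kappa_rational:
  assumes "1 \<le> k"
  obtains P Q :: "real poly" where "Q \<noteq> 0" "\<And>z. poly Q z = 0 \<Longrightarrow> \<exists>j\<in>{1..k}. z = - 1 / real j"
    "\<And>l. 0 < l \<Longrightarrow> rho (\<lambda>x y. l * kappa x y) k = poly P l / poly Q l"
proof -
  obtain P Q where "Q \<noteq> 0" "\<forall>z. poly Q z = 0 \<longrightarrow> z \<in> pole_set k" "\<forall>l>0. rho_int l k = poly P l / poly Q l"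
    using rational_rho_coeff_rho_int[of k] unfolding rational_poles_in_def by blast
  then show ?thesis
    using that[of Q P] rho_kappa_eq_rho_int[OF _ assms] by (auto simp: pole_set_def)
qed

lemma rho_x_kappa_rational_expansion:
  assumes "1 \<le> k"
  obtains P Q :: "nat \<Rightarrow> real poly" where "\<And>i. Q i \<noteq> 0"
    "\<And>l x. 0 < l \<Longrightarrow> x \<in> {0<..1} \<Longrightarrow>
      rho_x (\<lambda>x y. l * kappa x y) k x = (\<Sum>i\<le>k. poly (P i) l / poly (Q i) l * (x powr l) ^ i)"
proof -
  have "\<forall>i. \<exists>PQ. snd PQ \<noteq> 0 \<and> (\<forall>l>0. rho_coeff l k i = poly (fst PQ) l / poly (snd PQ) l)"
  proof
    fix i
    obtain P Q where "Q \<noteq> 0" "\<forall>l>0. rho_coeff l k i = poly P l / poly Q l"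
      using rational_rho_coeff_rho_int[of k] unfolding rational_poles_in_def by blast
    then show "\<exists>PQ. snd PQ \<noteq> 0 \<and> (\<forall>l>0. rho_coeff l k i = poly (fst PQ) l / poly (snd PQ) l)"
      by (intro exI[of _ "(P, Q)"]) simp
  qed
  then obtain PQ where PQ: "\<And>i. snd (PQ i) \<noteq> 0"
    "\<And>i l. 0 < l \<Longrightarrow> rho_coeff l k i = poly (fst (PQ i)) l / poly (snd (PQ i)) l"
    by metis
  have "rho_x (\<lambda>x y. l * kappa x y) k x = (\<Sum>i\<le>k. poly (fst (PQ i)) l / poly (snd (PQ i)) l * (x powr l) ^ i)"
    if "0 < l" "x \<in> {0<..1}" for l x
    using rho_x_kappa_eq_rho_poly[OF that(1) assms that(2)] PQ(2)[OF that(1)]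
    by (simp add: rho_poly_def poly_sum poly_monom)
  with PQ(1) show ?thesis
    using that[of "\<lambda>i. snd (PQ i)" "\<lambda>i. fst (PQ i)"] by blast
qed

lemma rho_x_kappa_at_1:
  assumes "0 < l" "1 \<le> k"
  shows "rho_x (\<lambda>x y. l * kappa x y) k 1 = (if k = 1 then 1 else 0)"
  using rho_x_kappa_eq_rho_poly[OF assms, of 1] by (simp add: poly_rho_poly_1)

lemma euler_rho_poly:
  "1 \<le> k \<Longrightarrow> euler_poly (rho_poly l k)
    = smult (real k) (rho_poly l k) - (\<Sum>j=1..k-1. smult (real j * rho_int l (k-j)) (rho_poly l j))"
  by (simp add: poly_eq_iff coeff_euler_poly coeff_rho_poly coeff_sum rho_coeff_euler[of k _ l] mult.assoc)

lemma rho_x_kappa_euler_ode: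
  assumes l: "0 < l" and k: "1 \<le> k" and x: "x \<in> {0<..1}"
  shows "\<exists>D. (rho_x (\<lambda>x y. l * kappa x y) k has_real_derivative D) (at x within {0<..1}) \<and>
    x * D = real k * l * rho_x (\<lambda>x y. l * kappa x y) k x -
      (\<Sum>j=1..k-1. real j * l * rho (\<lambda>x y. l * kappa x y) (k - j) * rho_x (\<lambda>x y. l * kappa x y) j x)"
proof (intro exI conjI)
  define t where "t = x powr l"
  define D where "D = poly (pderiv (rho_poly l k)) t * (l * x powr (l - 1))"
  have "0 < x" using x by simp
  have "((\<lambda>y. poly (rho_poly l k) (y powr l)) has_real_derivative D) (at x)"
    unfolding D_def t_def using DERIV_chain2[OF poly_DERIV has_real_derivative_powr[OF \<open>0 < x\<close>]] by simp
  then show "(rho_x (\<lambda>x y. l * kappa x y) k has_real_derivative D) (at x within {0<..1})"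
    by (rule has_field_derivative_transform_within[OF has_field_derivative_at_within zero_less_one x])
       (use rho_x_kappa_eq_rho_poly[OF l k] in auto)
  have "x * D = l * poly (euler_poly (rho_poly l k)) t"
    using \<open>0 < x\<close> by (simp add: D_def euler_poly_def t_def powr_diff)
  also have "\<dots> = real k * l * poly (rho_poly l k) t - (\<Sum>j=1..k-1. real j * l * rho_int l (k - j) * poly (rho_poly l j) t)"
    by (simp add: euler_rho_poly[OF k] poly_sum algebra_simps sum_distrib_left)
  also have "(\<Sum>j=1..k-1. real j * l * rho_int l (k - j) * poly (rho_poly l j) t)
      = (\<Sum>j=1..k-1. real j * l * rho (\<lambda>x y. l * kappa x y) (k - j) * rho_x (\<lambda>x y. l * kappa x y) j x)"
    using x by (intro sum.cong refl) (auto simp: t_def rho_x_kappa_eq_rho_poly[OF l] rho_kappa_eq_rho_int[OF l])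
  finally show "x * D = real k * l * rho_x (\<lambda>x y. l * kappa x y) k x -
      (\<Sum>j=1..k-1. real j * l * rho (\<lambda>x y. l * kappa x y) (k - j) * rho_x (\<lambda>x y. l * kappa x y) j x)"
    using rho_x_kappa_eq_rho_poly[OF l k x] by (simp add: t_def)
qed

theorem theorem6p5:
  fixes lam :: real
  assumes "lam > 0"
  shows "(rho (\<lambda>x y. lam * kappa x y) 1 = 1 / (1 + lam)) \<and>
    (\<forall>k\<ge>2. rho (\<lambda>x y. lam * kappa x y) k =
            real k * lam / (2 * (1 + real k * lam)) *
            (\<Sum>j=1..k-1. rho (\<lambda>x y. lam * kappa x y) (k - j) * rho (\<lambda>x y. lam * kappa x y) j)) \<and>
    (\<forall>k\<ge>1. \<exists>P Q :: real poly. Q \<noteq> 0 \<and>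
            (\<forall>z. poly Q z = 0 \<longrightarrow> (\<exists>j\<in>{1..k}. z = - 1 / real j)) \<and>
            (\<forall>l>0. rho (\<lambda>x y. l * kappa x y) k = poly P l / poly Q l)) \<and>
    (\<forall>k\<ge>1. \<exists>(N::nat) (P :: nat \<Rightarrow> real poly) (Q :: nat \<Rightarrow> real poly).
            (\<forall>i\<le>N. Q i \<noteq> 0) \<and>
            (\<forall>l>0. \<forall>x\<in>{0<..1}. rho_x (\<lambda>x y. l * kappa x y) k x =
                 (\<Sum>i\<le>N. poly (P i) l / poly (Q i) l * (x powr l) ^ i))) \<and>
    (\<forall>k\<ge>1. \<forall>x\<in>{0<..1}. \<exists>D.
            (rho_x (\<lambda>x y. lam * kappa x y) k has_real_derivative D) (at x within {0<..1}) \<and>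
            x * D = real k * lam * rho_x (\<lambda>x y. lam * kappa x y) k x -
              (\<Sum>j=1..k-1. real j * lam * rho (\<lambda>x y. lam * kappa x y) (k - j)
                             * rho_x (\<lambda>x y. lam * kappa x y) j x)) \<and>
    (rho_x (\<lambda>x y. lam * kappa x y) 1 1 = 1) \<and>
    (\<forall>k\<ge>2. rho_x (\<lambda>x y. lam * kappa x y) k 1 = 0)"
proof (intro conjI allI impI ballI)
  show "rho (\<lambda>x y. lam * kappa x y) 1 = 1 / (1 + lam)"
    using rho_kappa_eq_rho_int[OF assms, of 1] rho_int_1[of lam] by simp
  fix k :: nat
  show "rho (\<lambda>x y. lam * kappa x y) k = real k * lam / (2 * (1 + real k * lam)) *
      (\<Sum>j=1..k-1. rho (\<lambda>x y. lam * kappa x y) (k - j) * rho (\<lambda>x y. lam * kappa x y) j)" if "2 \<le> k"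
    by (rule rho_kappa_rec[OF assms that])
  show "\<exists>P Q :: real poly. Q \<noteq> 0 \<and> (\<forall>z. poly Q z = 0 \<longrightarrow> (\<exists>j\<in>{1..k}. z = - 1 / real j)) \<and>
      (\<forall>l>0. rho (\<lambda>x y. l * kappa x y) k = poly P l / poly Q l)" if "1 \<le> k"
    by (rule rho_kappa_rational[OF that]) blast
  show "\<exists>(N::nat) (P :: nat \<Rightarrow> real poly) Q. (\<forall>i\<le>N. Q i \<noteq> 0) \<and>
      (\<forall>l>0. \<forall>x\<in>{0<..1}. rho_x (\<lambda>x y. l * kappa x y) k x = (\<Sum>i\<le>N. poly (P i) l / poly (Q i) l * (x powr l) ^ i))"
    if "1 \<le> k"
    by (rule rho_x_kappa_rational_expansion[OF that]) blast
  show "rho_x (\<lambda>x y. lam * kappa x y) k 1 = 0" if "2 \<le> k"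
    using rho_x_kappa_at_1[OF assms, of k] that by simp
  fix x :: real
  show "\<exists>D. (rho_x (\<lambda>x y. lam * kappa x y) k has_real_derivative D) (at x within {0<..1}) \<and>
      x * D = real k * lam * rho_x (\<lambda>x y. lam * kappa x y) k x -
        (\<Sum>j=1..k-1. real j * lam * rho (\<lambda>x y. lam * kappa x y) (k - j) * rho_x (\<lambda>x y. lam * kappa x y) j x)"
    if "1 \<le> k" "x \<in> {0<..1}"
    by (rule rho_x_kappa_euler_ode[OF assms that])
qed (use rho_x_kappa_at_1[OF assms, of 1] in simp)

end
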